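(* In the setting below, for $x\in V_1$, $\lambda\in F^\times$ and $y\in\mathrm{GSpin}(V_1)(F)$, the element $n(x)m(\lambda,y)$ lies in $\mathrm{Clif}(\Lambda)$ if and only if $y$, $\lambda y$ and $xy$ all lie in $\mathrm{Clif}(\Lambda_1)$.
   Context: $F$ is a $p$-adic local field with ring of integers $\mathcal{O}_F$. $V$ is a quasisplit quadratic space: $V=U^\vee\oplus V_E\oplus U$, $U^\vee=\mathrm{span}(e_1,\dots,e_n)$, $U=\mathrm{span}(f_1,\dots,f_n)$ isotropic, $(e_i,f_j)=\delta_{ij}$ for the bilinear form $(v,w)=q(v+w)-q(v)-q(w)$, $V_E\perp U^\vee\oplus U$ identified with $E$ with form $N_{E/F}$ ($E=F$, $N(t)=t^2$, or $E$ quadratic étale); $n\ge1$. $\Lambda=\bigoplus\mathcal{O}_Fe_i\oplus\mathcal{O}_E\oplus\bigoplus\mathcal{O}_Ff_i$; $V_1=\mathrm{span}(e_2,\dots,e_n,f_2,\dots,f_n)\oplus V_E$, so $V=Fe_1\oplus V_1\oplus Ff_1$; $\Lambda_1=\Lambda\cap V_1$. $\mathrm{Clif}(\cdot)$ denotes Clifford algebras (tensor algebra modulo $v\otimes v-q(v)$), $\mathrm{Clif}(V_1)\subseteq\mathrm{Clif}(V)$, and for a lattice $L$, $\mathrm{Clif}(L)$ is the $\mathcal{O}_F$-subalgebra generated by $L$. $\mathrm{GSpin}(V_1)(F)=\{g\in\mathrm{Clif}^+(V_1):g^*g\in F^\times,\ g^*V_1g\subseteq V_1\}$ with $*$ the order-reversing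 anti-involution. Products below are in $\mathrm{Clif}(V)$: $n(x)=1+f_1x$ for $x\in V_1$, and $m(\lambda,y)=(e_1f_1+\lambda f_1e_1)\,y$. *)

theory Defs
  imports Main
begin

text \<open>A p-adic local field: a field of characteristic 0, complete with respect to a
normalized discrete valuation v (v is only meaningful on nonzero elements), with finite
residue field.\<close>

definition val_ring :: "('a::field \<Rightarrow> int) \<Rightarrow> 'a set" where
  "val_ring v = {x. x = 0 \<or> 0 \<le> v x}"

definition val_ideal :: "('a::field \<Rightarrow> int) \<Rightarrow> 'a set" where
  "val_ideal v = {x. x = 0 \<or> 0 < v x}"

definition padic_local_field :: "('a::field \<Rightarrow> int) \<Rightarrow> bool" where
  "padic_local_field v \<longleftrightarrow>
     (\<forall>k::nat. k > 0 \<longrightarrow> of_nat k \<noteq> (0::'a)) \<and>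
     (\<forall>x y. x \<noteq> 0 \<longrightarrow> y \<noteq> 0 \<longrightarrow> v (x * y) = v x + v y) \<and>
     (\<forall>x y. x \<noteq> 0 \<longrightarrow> y \<noteq> 0 \<longrightarrow> x + y \<noteq> 0 \<longrightarrow> min (v x) (v y) \<le> v (x + y)) \<and>
     (\<exists>\<pi>. \<pi> \<noteq> 0 \<and> v \<pi> = 1) \<and>
     (\<exists>R. finite R \<and> R \<subseteq> val_ring v \<and>
          (\<forall>x\<in>val_ring v. \<exists>r\<in>R. x - r \<in> val_ideal v)) \<and>
     (\<forall>X :: nat \<Rightarrow> 'a.
        (\<forall>k. \<exists>N. \<forall>m\<ge>N. \<forall>l\<ge>N. X m = X l \<or> k \<le> v (X m - X l)) \<longrightarrow>
        (\<exists>L. \<forall>k. \<exists>N. \<forall>m\<ge>N. X m = L \<or> k \<le> v (X m - L)))"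

text \<open>E is either F itself (flag isF), realised as the pairs (a,0), or the quadratic etale
algebra F[w]/(w^2 - t w + s) with t^2 - 4 s \<noteq> 0 (every quadratic etale algebra over a
field of characteristic 0 is of this form); a pair (a,b) stands for a + b w.\<close>

definition emul :: "'a::field \<Rightarrow> 'a \<Rightarrow> 'a \<times> 'a \<Rightarrow> 'a \<times> 'a \<Rightarrow> 'a \<times> 'a" where
  "emul t s z w = (fst z * fst w - s * snd z * snd w,
                   fst z * snd w + snd z * fst w + t * snd z * snd w)"

fun epow :: "'a::field \<Rightarrow> 'a \<Rightarrow> 'a \<times> 'a \<Rightarrow> nat \<Rightarrow> 'a \<times> 'a" where
  "epow t s z 0 = (1, 0)"
| "epow t s z (Suc k) = emul t s z (epow t s z k)"

text \<open>Norm N_{E/F}: determinant of multiplication by a + b w in the basis (1, w).\<close>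
definition enorm :: "'a::field \<Rightarrow> 'a \<Rightarrow> 'a \<times> 'a \<Rightarrow> 'a" where
  "enorm t s z = fst z * (fst z + t * snd z) - (- s * snd z) * snd z"

definition E_space :: "bool \<Rightarrow> ('a::field \<times> 'a) set" where
  "E_space isF = (if isF then {z. snd z = 0} else UNIV)"

definition E_dim :: "bool \<Rightarrow> nat" where
  "E_dim isF = (if isF then 1 else 2)"

text \<open>O_E: the integral closure of O_F in E.\<close>
definition O_E :: "('a::field \<Rightarrow> int) \<Rightarrow> bool \<Rightarrow> 'a \<Rightarrow> 'a \<Rightarrow> ('a \<times> 'a) set" where
  "O_E v isF t s =
     (if isF then {z. snd z = 0 \<and> fst z \<in> val_ring v}
      else {z. \<exists>k>0. \<exists>c::nat \<Rightarrow> 'a. (\<forall>j<k. c j \<in> val_ring v) \<and>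
                fst (epow t s z k) + (\<Sum>j<k. c j * fst (epow t s z j)) = 0 \<and>
                snd (epow t s z k) + (\<Sum>j<k. c j * snd (epow t s z j)) = 0})"

text \<open>A vector (a, z, b) stands for sum_i a_i e_i + z + sum_i b_i f_i, i = 1..n.\<close>
type_synonym 'a qvec = "(nat \<Rightarrow> 'a) \<times> ('a \<times> 'a) \<times> (nat \<Rightarrow> 'a)"

definition Vsp :: "nat \<Rightarrow> bool \<Rightarrow> ('a::field) qvec set" where
  "Vsp n isF = {(a, z, b). (\<forall>i. (i < 1 \<or> n < i) \<longrightarrow> a i = 0 \<and> b i = 0) \<and> z \<in> E_space isF}"

definition vadd :: "('a::field) qvec \<Rightarrow> 'a qvec \<Rightarrow> 'a qvec" where
  "vadd u w = ((\<lambda>i. fst u i + fst w i),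
               (fst (fst (snd u)) + fst (fst (snd w)), snd (fst (snd u)) + snd (fst (snd w))),
               (\<lambda>i. snd (snd u) i + snd (snd w) i))"

definition vscale :: "'a::field \<Rightarrow> 'a qvec \<Rightarrow> 'a qvec" where
  "vscale c u = ((\<lambda>i. c * fst u i), (c * fst (fst (snd u)), c * snd (fst (snd u))),
                 (\<lambda>i. c * snd (snd u) i))"

definition qform :: "nat \<Rightarrow> 'a::field \<Rightarrow> 'a \<Rightarrow> 'a qvec \<Rightarrow> 'a" where
  "qform n t s u = (\<Sum>i=1..n. fst u i * snd (snd u) i) + enorm t s (fst (snd u))"

definition evec :: "nat \<Rightarrow> ('a::field) qvec" where
  "evec i = ((\<lambda>j. if j = i then 1 else 0), (0, 0), (\<lambda>j. 0))"

definition fvec :: "nat \<Rightarrow> ('a::field) qvec" where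
  "fvec i = ((\<lambda>j. 0), (0, 0), (\<lambda>j. if j = i then 1 else 0))"

definition V1sp :: "nat \<Rightarrow> bool \<Rightarrow> ('a::field) qvec set" where
  "V1sp n isF = {u \<in> Vsp n isF. fst u 1 = 0 \<and> snd (snd u) 1 = 0}"

definition Lat :: "('a::field \<Rightarrow> int) \<Rightarrow> nat \<Rightarrow> bool \<Rightarrow> 'a \<Rightarrow> 'a \<Rightarrow> 'a qvec set" where
  "Lat v n isF t s = {u \<in> Vsp n isF. (\<forall>i. fst u i \<in> val_ring v \<and> snd (snd u) i \<in> val_ring v)
                                    \<and> fst (snd u) \<in> O_E v isF t s}"

definition Lat1 :: "('a::field \<Rightarrow> int) \<Rightarrow> nat \<Rightarrow> bool \<Rightarrow> 'a \<Rightarrow> 'a \<Rightarrow> 'a qvec set" where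
  "Lat1 v n isF t s = Lat v n isF t s \<inter> V1sp n isF"

inductive_set alg_gen :: "('a \<Rightarrow> 'c::ring_1) \<Rightarrow> 'a set \<Rightarrow> 'c set \<Rightarrow> 'c set"
  for sc R S where
  scal: "r \<in> R \<Longrightarrow> sc r \<in> alg_gen sc R S"
| gen: "z \<in> S \<Longrightarrow> z \<in> alg_gen sc R S"
| add: "z \<in> alg_gen sc R S \<Longrightarrow> w \<in> alg_gen sc R S \<Longrightarrow> z + w \<in> alg_gen sc R S"
| mult: "z \<in> alg_gen sc R S \<Longrightarrow> w \<in> alg_gen sc R S \<Longrightarrow> z * w \<in> alg_gen sc R S"

inductive_set even_gen :: "('a \<Rightarrow> 'c::ring_1) \<Rightarrow> 'c set \<Rightarrow> 'c set"
  for sc S where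
  scal: "sc r \<in> even_gen sc S"
| gen2: "z \<in> S \<Longrightarrow> w \<in> S \<Longrightarrow> z * w \<in> even_gen sc S"
| add: "z \<in> even_gen sc S \<Longrightarrow> w \<in> even_gen sc S \<Longrightarrow> z + w \<in> even_gen sc S"
| mult: "z \<in> even_gen sc S \<Longrightarrow> w \<in> even_gen sc S \<Longrightarrow> z * w \<in> even_gen sc S"

definition F_lin_indep :: "('a::field \<Rightarrow> 'c::ring_1) \<Rightarrow> 'c set \<Rightarrow> bool" where
  "F_lin_indep sc B \<longleftrightarrow> finite B \<and>
     (\<forall>c. (\<Sum>b\<in>B. sc (c b) * b) = 0 \<longrightarrow> (\<forall>b\<in>B. c b = 0))"

text \<open>(C, sc, iota) is the Clifford algebra Clif(V) of (V, q): C is an F-algebra (via the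
central ring map sc), iota : V -> C is F-linear with iota(u)^2 = q(u), C is generated by
iota(V), and dim_F C = 2^(dim V); these properties characterise Clif(V) up to unique
isomorphism.  star is the order-reversing anti-involution fixing V pointwise.\<close>
definition clifford_alg ::
  "nat \<Rightarrow> bool \<Rightarrow> 'a::field \<Rightarrow> 'a \<Rightarrow> ('a \<Rightarrow> 'c::ring_1) \<Rightarrow> ('a qvec \<Rightarrow> 'c) \<Rightarrow> ('c \<Rightarrow> 'c) \<Rightarrow> bool" where
  "clifford_alg n isF t s sc \<iota> star \<longleftrightarrow>
     sc 1 = 1 \<and> (\<forall>a b. sc (a + b) = sc a + sc b) \<and> (\<forall>a b. sc (a * b) = sc a * sc b) \<and>
     (\<forall>a z. sc a * z = z * sc a) \<and>
     (\<forall>u\<in>Vsp n isF. \<forall>w\<in>Vsp n isF. \<iota> (vadd u w) = \<iota> u + \<iota> w) \<and>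
     (\<forall>c. \<forall>u\<in>Vsp n isF. \<iota> (vscale c u) = sc c * \<iota> u) \<and>
     (\<forall>u\<in>Vsp n isF. \<iota> u * \<iota> u = sc (qform n t s u)) \<and>
     (\<forall>z. z \<in> alg_gen sc UNIV (\<iota> ` Vsp n isF)) \<and>
     (\<exists>B. F_lin_indep sc B \<and> card B = 2 ^ (2 * n + E_dim isF)) \<and>
     (\<forall>z w. star (z + w) = star z + star w) \<and>
     (\<forall>z w. star (z * w) = star w * star z) \<and>
     (\<forall>a. star (sc a) = sc a) \<and>
     (\<forall>u\<in>Vsp n isF. star (\<iota> u) = \<iota> u)"

definition GSpin1 ::
  "nat \<Rightarrow> bool \<Rightarrow> ('a::field \<Rightarrow> 'c::ring_1) \<Rightarrow> ('a qvec \<Rightarrow> 'c) \<Rightarrow> ('c \<Rightarrow> 'c) \<Rightarrow> 'c set" where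
  "GSpin1 n isF sc \<iota> star =
     {g \<in> even_gen sc (\<iota> ` V1sp n isF).
        (\<exists>c. c \<noteq> 0 \<and> star g * g = sc c) \<and>
        (\<forall>w\<in>V1sp n isF. \<exists>w'\<in>V1sp n isF. star g * \<iota> w * g = \<iota> w')}"

end

theory Submission
  imports Defs "HOL.Vector_Spaces"
begin

text \<open>Write \<open>e = e\<^sub>1\<close> and \<open>f = f\<^sub>1\<close>. Then \<open>e f\<close>, \<open>f e\<close>, \<open>e\<close>, \<open>f\<close> behave like the matrix units of
  \<open>M\<^sub>2(F)\<close>, and every element of \<open>Clif(V)\<close> is \<open>a e f + b f e + c e + d f\<close> with coefficients in
  \<open>Clif(V\<^sub>1)\<close>; since a lattice vector is a \<open>\<Lambda>\<^sub>1\<close>-vector plus an \<open>\<O>\<^sub>F\<close>-combination of \<open>e\<close> and \<open>f\<close>,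
  the elements of \<open>Clif(\<Lambda>)\<close> even admit coefficients in \<open>Clif(\<Lambda>\<^sub>1)\<close>. The coefficients are
  unique: \<open>dim Clif(V) = 4 \<cdot> 2 ^ dim V\<^sub>1\<close>, while \<open>Clif(V\<^sub>1)\<close> is spanned by the \<open>2 ^ dim V\<^sub>1\<close> ordered
  products of a basis of \<open>V\<^sub>1\<close>, so right multiplication by each matrix unit is injective on
  \<open>Clif(V\<^sub>1)\<close>. An even \<open>y\<close> commutes and \<open>x \<in> V\<^sub>1\<close> anticommutes with \<open>e\<close> and \<open>f\<close>, whence
  \<open>n(x) m(\<lambda>, y) = y e f + \<lambda> y f e - x y f\<close>, and comparing coefficients gives the claim.\<close>

lemma alg_gen_mono:
  assumes "R \<subseteq> R'" "S \<subseteq> S'" and "z \<in> alg_gen sc R S"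
  shows "z \<in> alg_gen sc R' S'"
  using assms(3) by induction (use assms(1,2) in \<open>auto intro: alg_gen.intros\<close>)

lemma even_gen_subset_alg_gen: "even_gen sc G \<subseteq> alg_gen sc UNIV G"
proof
  fix y assume "y \<in> even_gen sc G"
  then show "y \<in> alg_gen sc UNIV G" by induction (auto intro: alg_gen.intros)
qed

locale isotropic_pair =
  fixes e f :: "'c::ring_1"
  assumes e_sq: "e * e = 0" and f_sq: "f * f = 0" and ef_fe: "e * f + f * e = 1"
begin

lemma e_e_mult: "e * (e * z) = 0"
  by (simp add: mult.assoc[symmetric] e_sq)

lemma f_f_mult: "f * (f * z) = 0"
  by (simp add: mult.assoc[symmetric] f_sq)

lemma efe: "e * (f * e) = e"
proof -
  have "e * (f * e) = e * (e * f + f * e)" by (simp add: distrib_left e_e_mult)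
  then show ?thesis by (simp add: ef_fe)
qed

lemma fef: "f * (e * f) = f"
proof -
  have "f * (e * f) = f * (e * f + f * e)" by (simp add: distrib_left f_f_mult)
  then show ?thesis by (simp add: ef_fe)
qed

lemma efe_mult: "e * (f * (e * z)) = e * z"
  by (metis efe mult.assoc)

lemma fef_mult: "f * (e * (f * z)) = f * z"
  by (metis fef mult.assoc)

lemmas pair_simps = e_sq f_sq e_e_mult f_f_mult efe fef efe_mult fef_mult

end

locale central_scalars =
  fixes sc :: "'a::field \<Rightarrow> 'c::ring_1"
  assumes sc_one: "sc 1 = 1" and sc_add: "sc (a + b) = sc a + sc b"
    and sc_mult: "sc (a * b) = sc a * sc b" and sc_central: "sc a * z = z * sc a"
begin

lemma sc_zero [simp]: "sc 0 = 0"
  using sc_add[of 0 0] by simp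

lemma sc_uminus: "sc (- a) = - sc a"
  using sc_add[of a "- a"] by (simp add: eq_neg_iff_add_eq_0 add.commute)

lemma sc_diff: "sc (a - b) = sc a - sc b"
  using sc_add[of a "- b"] by (simp add: sc_uminus)

definition scl :: "'a \<Rightarrow> 'c \<Rightarrow> 'c" where
  "scl a z = sc a * z"

sublocale vs: vector_space scl
  by unfold_locales (auto simp: scl_def sc_add sc_mult sc_one algebra_simps mult.assoc)

lemma module_hom_mult_right: "module_hom scl scl (\<lambda>w. w * X)"
  unfolding module_hom_iff using vs.module_axioms
  by (auto simp: scl_def algebra_simps mult.assoc)

lemma module_hom_mult_left: "module_hom scl scl (\<lambda>w. X * w)"
  unfolding module_hom_iff using vs.module_axioms
  by (auto simp: scl_def distrib_left) (metis mult.assoc sc_central)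

lemma alg_gen_zero: "0 \<in> R \<Longrightarrow> 0 \<in> alg_gen sc R S"
  using alg_gen.scal[of 0 R sc S] by simp

lemma alg_gen_uminus:
  assumes "- 1 \<in> R" "z \<in> alg_gen sc R S"
  shows "- z \<in> alg_gen sc R S"
  using alg_gen.mult[OF alg_gen.scal[OF assms(1)] assms(2)] by (simp add: sc_uminus sc_one)

end

section \<open>Algebras generated by anticommuting elements\<close>

definition monomial :: "'c::ring_1 list \<Rightarrow> nat list \<Rightarrow> 'c" where
  "monomial bs l = prod_list (map ((!) bs) l)"

definition ordered_monomials :: "'c::ring_1 list \<Rightarrow> nat set \<Rightarrow> 'c set" where
  "ordered_monomials bs X = {monomial bs l | l. sorted_wrt (<) l \<and> set l \<subseteq> X}"

lemma monomial_Cons: "monomial bs (i # l) = bs ! i * monomial bs l"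
  by (simp add: monomial_def)

lemma ordered_monomialsI: "sorted_wrt (<) l \<Longrightarrow> set l \<subseteq> X \<Longrightarrow> monomial bs l \<in> ordered_monomials bs X"
  unfolding ordered_monomials_def by blast

lemma ordered_monomials_mono: "X \<subseteq> Y \<Longrightarrow> ordered_monomials bs X \<subseteq> ordered_monomials bs Y"
  unfolding ordered_monomials_def by blast

lemma mult_ordered_monomials_subset:
  assumes "\<forall>k\<in>X. i < k"
  shows "(\<lambda>w. bs ! i * w) ` ordered_monomials bs X \<subseteq> ordered_monomials bs (insert i X)"
proof clarify
  fix w assume "w \<in> ordered_monomials bs X"
  then obtain l where "sorted_wrt (<) l" "set l \<subseteq> X" "w = monomial bs l"
    unfolding ordered_monomials_def by blast
  moreover have "sorted_wrt (<) (i # l)" "set (i # l) \<subseteq> insert i X"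
    using calculation assms by auto
  ultimately show "bs ! i * w \<in> ordered_monomials bs (insert i X)"
    using ordered_monomialsI by (metis monomial_Cons)
qed

lemma finite_card_ordered_monomials:
  "finite (ordered_monomials bs {..<k}) \<and> card (ordered_monomials bs {..<k}) \<le> 2 ^ k"
proof -
  let ?S = "{l. sorted_wrt (<) l \<and> set l \<subseteq> {..<k}}"
  have inj: "inj_on set ?S" by (auto intro!: inj_onI strict_sorted_equal)
  have sub: "set ` ?S \<subseteq> Pow {..<k}" by auto
  have "finite ?S" using inj_on_finite[OF inj sub] by simp
  moreover have "card ?S \<le> 2 ^ k" using card_inj_on_le[OF inj sub] by (simp add: card_Pow)
  moreover have "ordered_monomials bs {..<k} = monomial bs ` ?S"
    unfolding ordered_monomials_def by blast
  ultimately show ?thesis using card_image_le[of ?S "monomial bs"] by simp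
qed

context central_scalars
begin

context
  fixes bs :: "'c list"
  assumes anticomm: "\<And>i j. i < length bs \<Longrightarrow> j < length bs \<Longrightarrow> bs ! i * bs ! j + bs ! j * bs ! i \<in> range sc"
    and square: "\<And>i. i < length bs \<Longrightarrow> bs ! i * bs ! i \<in> range sc"
begin

lemma mult_monomial_in_span:
  "sorted_wrt (<) l \<Longrightarrow> set l \<subseteq> {..<length bs} \<Longrightarrow> j < length bs
   \<Longrightarrow> bs ! j * monomial bs l \<in> vs.span (ordered_monomials bs (insert j (set l)))"
proof (induction l arbitrary: j)
  case Nil
  then show ?case
    using ordered_monomialsI[of "[j]" "{j}" bs] by (simp add: monomial_def vs.span_base)
next
  case (Cons i l)
  let ?M = "ordered_monomials bs (insert j (set (i # l)))"
  have l: "sorted_wrt (<) l" "\<forall>k\<in>set l. i < k" "set l \<subseteq> {..<length bs}" and i: "i < length bs"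
    using Cons.prems by auto
  have tail_in: "vs.span (ordered_monomials bs (set l)) \<subseteq> vs.span ?M"
    by (intro vs.span_mono ordered_monomials_mono) auto
  have tail: "monomial bs l \<in> vs.span ?M"
    using tail_in vs.span_base[OF ordered_monomialsI[OF l(1) order_refl]] by blast
  consider "j < i" | "j = i" | "i < j" by linarith
  then show ?case
  proof cases
    case 1
    then have "monomial bs (j # i # l) \<in> ?M" using l by (intro ordered_monomialsI) auto
    then show ?thesis by (simp add: monomial_Cons vs.span_base)
  next
    case 2
    obtain c where "bs ! i * bs ! i = sc c" using square[OF i] by blast
    then have "bs ! j * monomial bs (i # l) = scl c (monomial bs l)"
      by (simp add: monomial_Cons scl_def 2 mult.assoc[symmetric])
    then show ?thesis using tail by (simp add: vs.span_scale)
  next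
    case 3
    obtain c where c: "bs ! j * bs ! i + bs ! i * bs ! j = sc c"
      using anticomm[OF Cons.prems(3) i] by blast
    \<comment> \<open>move \<open>bs ! j\<close> past \<open>bs ! i\<close>, at the price of a scalar multiple of the tail\<close>
    have "bs ! j * monomial bs (i # l) = (sc c - bs ! i * bs ! j) * monomial bs l"
      by (simp add: monomial_Cons mult.assoc[symmetric] c[symmetric])
    then have eq: "bs ! j * monomial bs (i # l) = scl c (monomial bs l) - bs ! i * (bs ! j * monomial bs l)"
      by (simp add: scl_def left_diff_distrib mult.assoc)
    have "(\<lambda>w. bs ! i * w) ` ordered_monomials bs (insert j (set l)) \<subseteq> ?M"
      using mult_ordered_monomials_subset[of "insert j (set l)" i bs] l(2) 3 by (simp add: insert_commute)
    then have "vs.span ((\<lambda>w. bs ! i * w) ` ordered_monomials bs (insert j (set l))) \<subseteq> vs.span ?M"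
      by (rule vs.span_mono)
    moreover have "bs ! i * (bs ! j * monomial bs l)
        \<in> vs.span ((\<lambda>w. bs ! i * w) ` ordered_monomials bs (insert j (set l)))"
      using Cons.IH[OF l(1,3) Cons.prems(3)]
      by (simp add: module_hom.span_image[OF module_hom_mult_left])
    ultimately show ?thesis unfolding eq using tail by (blast intro: vs.span_diff vs.span_scale)
  qed
qed

lemma span_monomials_mult_closed:
  assumes g: "g \<in> vs.span (set bs)" and y: "y \<in> vs.span (ordered_monomials bs {..<length bs})"
  shows "g * y \<in> vs.span (ordered_monomials bs {..<length bs})"
proof -
  let ?M = "ordered_monomials bs {..<length bs}"
  have gen: "bs ! j * w \<in> vs.span ?M" if "j < length bs" "w \<in> ?M" for j w
  proof -
    obtain l where l: "sorted_wrt (<) l" "set l \<subseteq> {..<length bs}" "w = monomial bs l"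
      using \<open>w \<in> ?M\<close> unfolding ordered_monomials_def by blast
    have "vs.span (ordered_monomials bs (insert j (set l))) \<subseteq> vs.span ?M"
      using l(2) that(1) by (intro vs.span_mono ordered_monomials_mono) auto
    then show ?thesis using mult_monomial_in_span[OF l(1,2) that(1)] l(3) by blast
  qed
  have "bs ! j * y \<in> vs.span ?M" if "j < length bs" for j
  proof -
    have "bs ! j * y \<in> vs.span ((\<lambda>w. bs ! j * w) ` ?M)"
      using y by (simp add: module_hom.span_image[OF module_hom_mult_left])
    moreover have "vs.span ((\<lambda>w. bs ! j * w) ` ?M) \<subseteq> vs.span ?M"
      using gen[OF that] by (intro vs.span_minimal) auto
    ultimately show ?thesis by blast
  qed
  then have "vs.span ((\<lambda>g. g * y) ` set bs) \<subseteq> vs.span ?M"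
    by (intro vs.span_minimal) (auto simp: in_set_conv_nth)
  moreover have "g * y \<in> vs.span ((\<lambda>g. g * y) ` set bs)"
    using g by (simp add: module_hom.span_image[OF module_hom_mult_right])
  ultimately show ?thesis by blast
qed

lemma alg_gen_subset_span_monomials:
  assumes "G \<subseteq> vs.span (set bs)"
  shows "alg_gen sc UNIV G \<subseteq> vs.span (ordered_monomials bs {..<length bs})"
proof
  let ?M = "ordered_monomials bs {..<length bs}"
  fix z assume "z \<in> alg_gen sc UNIV G"
  then have "\<forall>y\<in>vs.span ?M. z * y \<in> vs.span ?M"
  proof induction
    case (scal r)
    then show ?case using vs.span_scale unfolding scl_def by blast
  next
    case (gen z)
    then show ?case using span_monomials_mult_closed assms by blast
  next
    case (add z w)
    then show ?case by (simp add: distrib_right vs.span_add)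
  next
    case (mult z w)
    then show ?case by (simp add: mult.assoc)
  qed
  moreover have "1 \<in> vs.span ?M"
    using ordered_monomialsI[of "[]"] by (auto simp: monomial_def intro: vs.span_base)
  ultimately show "z \<in> vs.span ?M" by fastforce
qed

end

lemma alg_gen_finite_span:
  assumes "finite G0"
    and "\<And>g h. g \<in> G0 \<Longrightarrow> h \<in> G0 \<Longrightarrow> g * h + h * g \<in> range sc"
    and "\<And>g. g \<in> G0 \<Longrightarrow> g * g \<in> range sc"
    and "G \<subseteq> vs.span G0"
  shows "\<exists>M. finite M \<and> card M \<le> 2 ^ card G0 \<and> alg_gen sc UNIV G \<subseteq> vs.span M"
proof -
  obtain bs where bs: "set bs = G0" "distinct bs" using finite_distinct_list[OF assms(1)] by blast
  have "alg_gen sc UNIV G \<subseteq> vs.span (ordered_monomials bs {..<length bs})"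
    using assms(2-4) bs(1) by (intro alg_gen_subset_span_monomials) auto
  moreover have "length bs = card G0" using bs distinct_card by fastforce
  ultimately show ?thesis using finite_card_ordered_monomials[of bs "length bs"] by metis
qed

end

section \<open>Injectivity from a dimension count\<close>

context vector_space
begin

lemma finite_basis_exists:
  assumes "finite G" "S \<subseteq> span G"
  obtains B where "B \<subseteq> S" "independent B" "S \<subseteq> span B" "card B = dim S" "finite B"
proof -
  obtain B where B: "B \<subseteq> S" "independent B" "S \<subseteq> span B" "card B = dim S"
    by (rule basis_exists)
  moreover have "finite B" using independent_span_bound[OF assms(1) B(2)] B(1) assms(2) by blast
  ultimately show thesis using that by blast
qed

context
  fixes g :: "'b \<Rightarrow> 'b"
  assumes lin: "Vector_Spaces.linear scale scale g"
begin

interpretation vector_space_pair scale scale ..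

lemma image_subset_span_image: "S \<subseteq> span G \<Longrightarrow> g ` S \<subseteq> span (g ` G)"
  using linear_span_image[OF lin] by blast

lemma dim_image_le_of_finite_span:
  assumes "finite G" "S \<subseteq> span G"
  shows "dim (g ` S) \<le> dim S"
proof -
  obtain B where B: "S \<subseteq> span B" "card B = dim S" "finite B"
    using finite_basis_exists[OF assms] by metis
  have "dim (g ` S) \<le> card (g ` B)"
    using B image_subset_span_image by (intro dim_le_card) auto
  also have "\<dots> \<le> dim S" using card_image_le[OF B(3)] B(2) by simp
  finally show ?thesis .
qed

lemma eq_zero_if_dim_image_ge:
  assumes "finite G" "S \<subseteq> span G" and dim: "dim S \<le> dim (g ` S)"
    and "x \<in> S" "g x = 0"
  shows "x = 0"
proof -
  obtain B where B: "B \<subseteq> S" "independent B" "S \<subseteq> span B" "card B = dim S" "finite B"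
    by (rule finite_basis_exists[OF assms(1,2)])
  have gS: "g ` S \<subseteq> span (g ` B)" using image_subset_span_image[OF B(3)] .
  have "dim (g ` S) \<le> card (g ` B)" using gS B(5) by (intro dim_le_card) auto
  then have card_gB: "card (g ` B) = card B" using card_image_le[OF B(5), of g] dim B(4) by linarith
  obtain B' where B': "B' \<subseteq> g ` B" "independent B'" "g ` B \<subseteq> span B'"
    by (rule maximal_independent_subset)
  have "g ` S \<subseteq> span B'" using gS span_mono[OF B'(3)] by (simp add: span_span)
  then have "card B' = dim (g ` S)" using B'(1,2) B(1) by (intro basis_card_eq_dim) blast+
  then have "B' = g ` B"
    using card_subset_eq[OF finite_imageI[OF B(5)] B'(1)] card_mono[OF finite_imageI[OF B(5)] B'(1)]
      card_gB dim B(4) by linarith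
  then have "independent (g ` B)" using B'(2) by simp
  moreover have "inj_on g B" using eq_card_imp_inj_on[OF B(5) card_gB] .
  ultimately show "x = 0"
    using linear_indep_image_lemma[OF lin B(5)] assms(4,5) B(3) by blast
qed

end

lemma eq_zero_if_images_span:
  fixes g :: "'i \<Rightarrow> 'b \<Rightarrow> 'b"
  assumes I: "finite I" and lin: "\<And>i. i \<in> I \<Longrightarrow> Vector_Spaces.linear scale scale (g i)"
    and S: "finite G" "S \<subseteq> span G"
    and B: "independent B" "B \<subseteq> span (\<Union>i\<in>I. g i ` S)" "card I * dim S \<le> card B"
    and x: "i \<in> I" "x \<in> S" "g i x = 0"
  shows "x = 0"
proof -
  have "\<forall>j\<in>I. \<exists>Bj. finite Bj \<and> g j ` S \<subseteq> span Bj \<and> card Bj = dim (g j ` S)"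
  proof
    fix j assume j: "j \<in> I"
    have "finite (g j ` G)" "g j ` S \<subseteq> span (g j ` G)"
      using S image_subset_span_image[OF lin[OF j]] by auto
    then show "\<exists>Bj. finite Bj \<and> g j ` S \<subseteq> span Bj \<and> card Bj = dim (g j ` S)"
      by (metis finite_basis_exists)
  qed
  then obtain Bs where Bs: "\<forall>j\<in>I. finite (Bs j) \<and> g j ` S \<subseteq> span (Bs j) \<and> card (Bs j) = dim (g j ` S)"
    by (rule bchoice[elim_format]) blast
  have "(\<Union>j\<in>I. g j ` S) \<subseteq> span (\<Union>j\<in>I. Bs j)"
  proof (rule UN_least)
    fix j assume "j \<in> I"
    then have "span (Bs j) \<subseteq> span (\<Union>j\<in>I. Bs j)" by (intro span_mono) blast
    then show "g j ` S \<subseteq> span (\<Union>j\<in>I. Bs j)" using Bs \<open>j \<in> I\<close> by blast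
  qed
  then have "B \<subseteq> span (\<Union>j\<in>I. Bs j)" using B(2) span_minimal[OF _ subspace_span] by blast
  then have "card B \<le> card (\<Union>j\<in>I. Bs j)"
    using independent_span_bound[OF _ B(1)] I Bs by blast
  also have "\<dots> \<le> (\<Sum>j\<in>I. dim (g j ` S))"
    using card_UN_le[OF I, of Bs] Bs by simp
  also have "\<dots> = dim (g i ` S) + (\<Sum>j\<in>I - {i}. dim (g j ` S))"
    using I x(1) by (rule sum.remove)
  also have "\<dots> \<le> dim (g i ` S) + (\<Sum>j\<in>I - {i}. dim S)"
    using dim_image_le_of_finite_span[OF lin S] by (intro add_left_mono sum_mono) auto
  finally have "card I * dim S \<le> dim (g i ` S) + (card I - 1) * dim S"
    using B(3) I x(1) by simp
  then have "dim S \<le> dim (g i ` S)"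
    using x(1) I by (cases "card I") (auto simp: card_gt_0_iff)
  then show ?thesis using eq_zero_if_dim_image_ge[OF lin[OF x(1)] S] x(2,3) by blast
qed

end

section \<open>Matrix units\<close>

locale hyperbolic_frame = central_scalars sc + isotropic_pair e f
  for sc :: "'a::field \<Rightarrow> 'c::ring_1" and e f :: 'c
begin

text \<open>The witness \<open>w'\<close> is the image of \<open>w\<close> under the main involution.\<close>

lemma alg_gen_twisted_comm:
  assumes G: "\<And>g. g \<in> G \<Longrightarrow> g * e = - (e * g) \<and> g * f = - (f * g)" and R: "- 1 \<in> R"
    and w: "w \<in> alg_gen sc R G"
  shows "\<exists>w'\<in>alg_gen sc R G. e * w = w' * e \<and> f * w = w' * f \<and> w * e = e * w' \<and> w * f = f * w'"
  using w
proof induction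
  case (scal r)
  then show ?case by (intro bexI[of _ "sc r"]) (auto intro: alg_gen.scal simp: sc_central)
next
  case (gen z)
  then show ?case
    using G[OF gen] alg_gen_uminus[OF R alg_gen.gen[OF gen]] by (intro bexI[of _ "- z"]) auto
next
  case (add z w)
  then obtain z' w' where "z' \<in> alg_gen sc R G" "w' \<in> alg_gen sc R G"
    "e * z = z' * e \<and> f * z = z' * f \<and> z * e = e * z' \<and> z * f = f * z'"
    "e * w = w' * e \<and> f * w = w' * f \<and> w * e = e * w' \<and> w * f = f * w'" by blast
  then show ?case by (intro bexI[of _ "z' + w'"]) (auto simp: algebra_simps intro: alg_gen.add)
next
  case (mult z w)
  then obtain z' w' where "z' \<in> alg_gen sc R G" "w' \<in> alg_gen sc R G"
    "e * z = z' * e \<and> f * z = z' * f \<and> z * e = e * z' \<and> z * f = f * z'"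
    "e * w = w' * e \<and> f * w = w' * f \<and> w * e = e * w' \<and> w * f = f * w'" by blast
  then show ?case by (intro bexI[of _ "z' * w'"]) (auto intro: alg_gen.mult, (metis mult.assoc)+)
qed

lemma alg_gen_comm_ef_fe:
  assumes "\<And>g. g \<in> G \<Longrightarrow> g * e = - (e * g) \<and> g * f = - (f * g)" "- 1 \<in> R" "w \<in> alg_gen sc R G"
  shows "e * f * w = w * (e * f)" "f * e * w = w * (f * e)"
  using alg_gen_twisted_comm[OF assms] by (metis mult.assoc)+

definition unit_combs :: "'c set \<Rightarrow> 'c set" where
  "unit_combs L = {a * (e * f) + b * (f * e) + c * e + d * f | a b c d. a \<in> L \<and> b \<in> L \<and> c \<in> L \<and> d \<in> L}"

lemma unit_combsI:
  "a \<in> L \<Longrightarrow> b \<in> L \<Longrightarrow> c \<in> L \<Longrightarrow> d \<in> L \<Longrightarrow> a * (e * f) + b * (f * e) + c * e + d * f \<in> unit_combs L"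
  unfolding unit_combs_def by blast

lemma unit_combsE:
  assumes "z \<in> unit_combs L"
  obtains a b c d where "a \<in> L" "b \<in> L" "c \<in> L" "d \<in> L" "z = a * (e * f) + b * (f * e) + c * e + d * f"
  using assms unfolding unit_combs_def by blast

text \<open>The coefficients are recovered by multiplying with \<open>e * f\<close> and \<open>f * e\<close> on both sides.\<close>

lemma unit_combs_unique:
  assumes comm: "\<And>w. w \<in> A \<Longrightarrow> e * f * w = w * (e * f) \<and> f * e * w = w * (f * e)"
    and inj: "\<And>X w. X \<in> {e * f, f * e, e, f} \<Longrightarrow> w \<in> A \<Longrightarrow> w * X = 0 \<Longrightarrow> w = 0"
    and abcd: "a \<in> A" "b \<in> A" "c \<in> A" "d \<in> A"
    and zero: "a * (e * f) + b * (f * e) + c * e + d * f = 0"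
  shows "a = 0 \<and> b = 0 \<and> c = 0 \<and> d = 0"
proof -
  let ?S = "a * (e * f) + b * (f * e) + c * e + d * f"
  have move: "e * (f * (w * z)) = w * (e * (f * z))" "f * (e * (w * z)) = w * (f * (e * z))"
    if "w \<in> A" for w z
    using comm[OF that] by (metis mult.assoc)+
  note simps = distrib_left distrib_right mult.assoc pair_simps move[OF abcd(1)] move[OF abcd(2)]
    move[OF abcd(3)] move[OF abcd(4)]
  have "a * (e * f) = e * f * ?S * (e * f)" "c * e = e * f * ?S * (f * e)"
    "b * (f * e) = f * e * ?S * (f * e)" "d * f = f * e * ?S * (e * f)"
    by (simp_all add: simps)
  then have "a * (e * f) = 0" "c * e = 0" "b * (f * e) = 0" "d * f = 0"
    unfolding zero by simp_all
  then show ?thesis using inj abcd by blast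
qed

lemma unit_combs_subset_alg_gen:
  assumes "e \<in> alg_gen sc R H" "f \<in> alg_gen sc R H" "L \<subseteq> alg_gen sc R H"
  shows "unit_combs L \<subseteq> alg_gen sc R H"
proof
  fix z assume "z \<in> unit_combs L"
  then obtain a b c d where "a \<in> L" "b \<in> L" "c \<in> L" "d \<in> L"
    and z: "z = a * (e * f) + b * (f * e) + c * e + d * f"
    by (rule unit_combsE)
  then show "z \<in> alg_gen sc R H"
    unfolding z using assms by (meson alg_gen.add alg_gen.mult subsetD)
qed

context
  fixes R :: "'a set" and G :: "'c set"
  assumes G: "\<And>g. g \<in> G \<Longrightarrow> g * e = - (e * g) \<and> g * f = - (f * g)"
    and R: "0 \<in> R" "- 1 \<in> R"
begin

lemma unit_combs_add:
  assumes "z \<in> unit_combs (alg_gen sc R G)" "w \<in> unit_combs (alg_gen sc R G)"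
  shows "z + w \<in> unit_combs (alg_gen sc R G)"
proof -
  obtain a b c d where "a \<in> alg_gen sc R G" "b \<in> alg_gen sc R G" "c \<in> alg_gen sc R G" "d \<in> alg_gen sc R G"
    and z: "z = a * (e * f) + b * (f * e) + c * e + d * f"
    using assms(1) by (rule unit_combsE)
  moreover obtain a' b' c' d' where "a' \<in> alg_gen sc R G" "b' \<in> alg_gen sc R G" "c' \<in> alg_gen sc R G" "d' \<in> alg_gen sc R G"
    and w: "w = a' * (e * f) + b' * (f * e) + c' * e + d' * f"
    using assms(2) by (rule unit_combsE)
  moreover have "z + w = (a + a') * (e * f) + (b + b') * (f * e) + (c + c') * e + (d + d') * f"
    unfolding z w by (simp add: algebra_simps)
  ultimately show ?thesis by (metis unit_combsI alg_gen.add)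
qed

lemma unit_combs_mult_alg_gen:
  assumes "z \<in> unit_combs (alg_gen sc R G)" "w \<in> alg_gen sc R G"
  shows "z * w \<in> unit_combs (alg_gen sc R G)"
proof -
  obtain a b c d where abcd: "a \<in> alg_gen sc R G" "b \<in> alg_gen sc R G" "c \<in> alg_gen sc R G" "d \<in> alg_gen sc R G"
    and z: "z = a * (e * f) + b * (f * e) + c * e + d * f"
    using assms(1) by (rule unit_combsE)
  obtain w' where w': "w' \<in> alg_gen sc R G" "e * w = w' * e" "f * w = w' * f"
    using alg_gen_twisted_comm[OF G R(2) assms(2)] by blast
  have "z * w = (a * w) * (e * f) + (b * w) * (f * e) + (c * w') * e + (d * w') * f"
    unfolding z using alg_gen_comm_ef_fe[OF G R(2) assms(2)] w'(2,3)
    by (simp add: distrib_right mult.assoc)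
  then show ?thesis using abcd assms(2) w'(1) by (auto intro!: unit_combsI alg_gen.mult)
qed

lemma unit_combs_mult_e:
  assumes "z \<in> unit_combs (alg_gen sc R G)"
  shows "z * e \<in> unit_combs (alg_gen sc R G)"
proof -
  obtain a b c d where "a \<in> alg_gen sc R G" "b \<in> alg_gen sc R G" "c \<in> alg_gen sc R G" "d \<in> alg_gen sc R G"
    and z: "z = a * (e * f) + b * (f * e) + c * e + d * f"
    using assms by (rule unit_combsE)
  moreover have "z * e = 0 * (e * f) + d * (f * e) + a * e + 0 * f"
    unfolding z by (simp add: distrib_right mult.assoc pair_simps)
  ultimately show ?thesis using alg_gen_zero[OF R(1)] by (metis unit_combsI)
qed

lemma unit_combs_mult_f:
  assumes "z \<in> unit_combs (alg_gen sc R G)"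
  shows "z * f \<in> unit_combs (alg_gen sc R G)"
proof -
  obtain a b c d where "a \<in> alg_gen sc R G" "b \<in> alg_gen sc R G" "c \<in> alg_gen sc R G" "d \<in> alg_gen sc R G"
    and z: "z = a * (e * f) + b * (f * e) + c * e + d * f"
    using assms by (rule unit_combsE)
  moreover have "z * f = c * (e * f) + 0 * (f * e) + 0 * e + b * f"
    unfolding z by (simp add: distrib_right mult.assoc pair_simps)
  ultimately show ?thesis using alg_gen_zero[OF R(1)] by (metis unit_combsI)
qed

lemma unit_combs_mult:
  assumes "z \<in> unit_combs (alg_gen sc R G)" "w \<in> unit_combs (alg_gen sc R G)"
  shows "z * w \<in> unit_combs (alg_gen sc R G)"
proof -
  obtain a b c d where abcd: "a \<in> alg_gen sc R G" "b \<in> alg_gen sc R G" "c \<in> alg_gen sc R G" "d \<in> alg_gen sc R G"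
    and w: "w = a * (e * f) + b * (f * e) + c * e + d * f"
    using assms(2) by (rule unit_combsE)
  have "z * w = z * a * e * f + z * b * f * e + z * c * e + z * d * f"
    unfolding w by (simp add: distrib_left mult.assoc)
  then show ?thesis using abcd
    by (simp only:) (intro unit_combs_add unit_combs_mult_e unit_combs_mult_f unit_combs_mult_alg_gen assms(1))
qed

lemma alg_gen_subset_unit_combs:
  assumes H: "\<And>h. h \<in> H \<Longrightarrow> \<exists>\<alpha>\<in>R. \<exists>\<beta>\<in>R. \<exists>g\<in>G. h = sc \<alpha> * e + sc \<beta> * f + g"
  shows "alg_gen sc R H \<subseteq> unit_combs (alg_gen sc R G)"
proof
  fix z assume "z \<in> alg_gen sc R H"
  then show "z \<in> unit_combs (alg_gen sc R G)"
  proof induction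
    case (scal r)
    have "sc r = sc r * (e * f) + sc r * (f * e) + sc 0 * e + sc 0 * f"
      by (simp add: distrib_left[symmetric] ef_fe)
    then show ?case using scal R(1) by (metis unit_combsI alg_gen.scal)
  next
    case (gen h)
    then obtain \<alpha> \<beta> g where "\<alpha> \<in> R" "\<beta> \<in> R" "g \<in> G" and h: "h = sc \<alpha> * e + sc \<beta> * f + g"
      using H by blast
    moreover have "h = g * (e * f) + g * (f * e) + sc \<alpha> * e + sc \<beta> * f"
      unfolding h by (simp add: distrib_left[symmetric] ef_fe algebra_simps)
    ultimately show ?case by (metis unit_combsI alg_gen.gen alg_gen.scal)
  next
    case (add z w)
    then show ?case using unit_combs_add by blast
  next
    case (mult z w)
    then show ?case using unit_combs_mult by blast
  qed
qed

end

lemma even_gen_comm_ef: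
  assumes G: "\<And>g. g \<in> G \<Longrightarrow> g * e = - (e * g) \<and> g * f = - (f * g)"
    and y: "y \<in> even_gen sc G"
  shows "y * e = e * y \<and> y * f = f * y"
  using y
proof induction
  case (scal r)
  then show ?case by (simp add: sc_central)
next
  case (gen2 z w)
  then have "z * (X * u) = - (X * (z * u))" "w * X = - (X * w)" if "X \<in> {e, f}" for X u
    using G that by (auto simp: mult.assoc[symmetric])
  then show ?case by (simp add: mult.assoc)
next
  case (add z w)
  then show ?case by (simp add: algebra_simps)
next
  case (mult z w)
  then show ?case by (metis mult.assoc)
qed

text \<open>The left-hand side is \<open>n(g) m(\<lambda>, y)\<close>.\<close>

lemma n_m_unit_comb:
  assumes g: "g * e = - (e * g)" "g * f = - (f * g)" and y: "y * e = e * y" "y * f = f * y"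
  shows "(1 + f * g) * ((e * f + sc lam * (f * e)) * y)
           = y * (e * f) + (sc lam * y) * (f * e) + 0 * e + (- (g * y)) * f"
proof -
  have move: "g * (X * u) = - (X * (g * u))" "y * (X * u) = X * (y * u)"
    "sc lam * (X * u) = X * (sc lam * u)" if "X \<in> {e, f}" for X u
    using that g y by (auto simp: mult.assoc[symmetric]) (metis sc_central)+
  show ?thesis
    using g y move sc_central[of lam e] sc_central[of lam f]
    by (simp add: distrib_left distrib_right mult.assoc pair_simps)
qed

end

section \<open>The quadratic space and its Clifford algebra\<close>

lemma Vsp_vadd: "u \<in> Vsp n isF \<Longrightarrow> w \<in> Vsp n isF \<Longrightarrow> vadd u w \<in> Vsp n isF"
  by (auto simp: Vsp_def vadd_def E_space_def split: if_splits)

lemma Vsp_vscale: "u \<in> Vsp n isF \<Longrightarrow> vscale c u \<in> Vsp n isF"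
  by (auto simp: Vsp_def vscale_def E_space_def split: if_splits)

lemma evec_Vsp: "1 \<le> i \<Longrightarrow> i \<le> n \<Longrightarrow> evec i \<in> Vsp n isF"
  by (auto simp: Vsp_def evec_def E_space_def)

lemma fvec_Vsp: "1 \<le> i \<Longrightarrow> i \<le> n \<Longrightarrow> fvec i \<in> Vsp n isF"
  by (auto simp: Vsp_def fvec_def E_space_def)

definition E_one_vec :: "('a::field) qvec" where
  "E_one_vec = ((\<lambda>_. 0), (1, 0), (\<lambda>_. 0))"

definition E_gen_vec :: "('a::field) qvec" where
  "E_gen_vec = ((\<lambda>_. 0), (0, 1), (\<lambda>_. 0))"

definition E_basis :: "bool \<Rightarrow> ('a::field) qvec set" where
  "E_basis isF = (if isF then {E_one_vec} else {E_one_vec, E_gen_vec})"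

definition V1_basis :: "nat \<Rightarrow> bool \<Rightarrow> ('a::field) qvec set" where
  "V1_basis n isF = evec ` {2..n} \<union> fvec ` {2..n} \<union> E_basis isF"

lemma V1_basis_Vsp: "V1_basis n isF \<subseteq> Vsp n isF"
  by (auto simp: V1_basis_def E_basis_def Vsp_def evec_def fvec_def E_one_vec_def E_gen_vec_def
      E_space_def)

lemma card_V1_basis: "card (V1_basis n isF :: ('a::field) qvec set) \<le> 2 * (n - 1) + E_dim isF"
proof -
  let ?E = "evec ` {2..n} :: 'a qvec set" and ?F = "fvec ` {2..n} :: 'a qvec set"
  have "card (V1_basis n isF :: 'a qvec set) \<le> card ?E + card ?F + card (E_basis isF :: 'a qvec set)"
    unfolding V1_basis_def by (meson card_Un_le add_right_mono order_trans)
  also have "\<dots> \<le> (n - 1) + (n - 1) + E_dim isF"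
    using card_image_le[of "{2..n}" evec] card_image_le[of "{2..n}" fvec]
    by (intro add_mono) (auto simp: E_basis_def E_dim_def card_insert_if)
  finally show ?thesis by simp
qed

definition strip1 :: "('a::field) qvec \<Rightarrow> 'a qvec" where
  "strip1 u = ((fst u)(1 := 0), fst (snd u), (snd (snd u))(1 := 0))"

lemma strip1_V1sp: "u \<in> Vsp n isF \<Longrightarrow> strip1 u \<in> V1sp n isF"
  by (cases u) (auto simp: strip1_def Vsp_def V1sp_def)

lemma strip1_Lat1:
  assumes "u \<in> Lat v n isF t s"
  shows "strip1 u \<in> Lat1 v n isF t s"
proof -
  have "u \<in> Vsp n isF" using assms by (simp add: Lat_def)
  then have "strip1 u \<in> V1sp n isF" by (rule strip1_V1sp)
  with assms show ?thesis by (auto simp: Lat1_def Lat_def V1sp_def strip1_def val_ring_def)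
qed

lemma vadd_strip1:
  "u = vadd (vadd (vscale (fst u 1) (evec 1)) (vscale (snd (snd u) 1) (fvec 1))) (strip1 u)"
  by (cases u) (auto simp: strip1_def vadd_def vscale_def evec_def fvec_def fun_eq_iff)

lemma plus_minus_one_in_val_ring:
  assumes "padic_local_field v"
  shows "1 \<in> val_ring v" "- 1 \<in> val_ring v"
proof -
  have mult: "v (x * y) = v x + v y" if "x \<noteq> 0" "y \<noteq> 0" for x y
    using assms that unfolding padic_local_field_def by blast
  have "v 1 = 0" using mult[of 1 1] by simp
  moreover have "v 1 = v (- 1) + v (- 1)" using mult[of "- 1" "- 1"] by simp
  ultimately show "1 \<in> val_ring v" "- 1 \<in> val_ring v" by (auto simp: val_ring_def)
qed

lemma zero_O_E: "(0, 0) \<in> O_E v isF t s"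
  unfolding O_E_def by (auto intro!: exI[of _ 1] exI[of _ "\<lambda>_. 0"] simp: emul_def val_ring_def)

lemma evec_fvec_Lat:
  assumes "padic_local_field v" "1 \<le> n"
  shows "evec 1 \<in> Lat v n isF t s" "fvec 1 \<in> Lat v n isF t s"
  using assms plus_minus_one_in_val_ring[OF assms(1)] zero_O_E
  by (auto simp: Lat_def evec_def fvec_def Vsp_def E_space_def val_ring_def)

locale clifford_setup =
  fixes n :: nat and isF :: bool and t s :: "'a::field"
    and sc :: "'a \<Rightarrow> 'c::ring_1" and \<iota> :: "'a qvec \<Rightarrow> 'c" and star :: "'c \<Rightarrow> 'c"
  assumes clifford: "clifford_alg n isF t s sc \<iota> star" and n_ge_1: "1 \<le> n"
begin

lemma \<iota>_vadd: "u \<in> Vsp n isF \<Longrightarrow> w \<in> Vsp n isF \<Longrightarrow> \<iota> (vadd u w) = \<iota> u + \<iota> w"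
  and \<iota>_vscale: "u \<in> Vsp n isF \<Longrightarrow> \<iota> (vscale c u) = sc c * \<iota> u"
  and \<iota>_square: "u \<in> Vsp n isF \<Longrightarrow> \<iota> u * \<iota> u = sc (qform n t s u)"
  and \<iota>_generates: "z \<in> alg_gen sc UNIV (\<iota> ` Vsp n isF)"
  and dim_Clif: "\<exists>B. F_lin_indep sc B \<and> card B = 2 ^ (2 * n + E_dim isF)"
  using clifford unfolding clifford_alg_def by blast+

sublocale central_scalars sc
  using clifford unfolding clifford_alg_def by unfold_locales blast+

lemma \<iota>_polar:
  assumes "u \<in> Vsp n isF" "w \<in> Vsp n isF"
  shows "\<iota> u * \<iota> w + \<iota> w * \<iota> u = sc (qform n t s (vadd u w) - qform n t s u - qform n t s w)"
proof -
  have "sc (qform n t s (vadd u w)) = (\<iota> u + \<iota> w) * (\<iota> u + \<iota> w)"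
    using \<iota>_square[OF Vsp_vadd[OF assms]] \<iota>_vadd[OF assms] by simp
  also have "\<dots> = sc (qform n t s u) + (\<iota> u * \<iota> w + \<iota> w * \<iota> u) + sc (qform n t s w)"
    using \<iota>_square assms by (simp add: algebra_simps)
  finally show ?thesis by (simp add: sc_diff)
qed

lemma \<iota>_anticomm:
  assumes "u \<in> Vsp n isF" "w \<in> Vsp n isF" "qform n t s (vadd u w) = qform n t s u + qform n t s w"
  shows "\<iota> u * \<iota> w = - (\<iota> w * \<iota> u)"
  using \<iota>_polar[OF assms(1,2)] assms(3) by (simp add: eq_neg_iff_add_eq_0)

lemma evec_1_Vsp: "evec 1 \<in> Vsp n isF" and fvec_1_Vsp: "fvec 1 \<in> Vsp n isF"
  using evec_Vsp[OF order_refl n_ge_1] fvec_Vsp[OF order_refl n_ge_1] .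

abbreviation "e \<equiv> \<iota> (evec 1)"
abbreviation "f \<equiv> \<iota> (fvec 1)"

sublocale hyperbolic_frame sc e f
proof unfold_locales
  show "e * e = 0" "f * f = 0"
    using \<iota>_square[OF evec_1_Vsp] \<iota>_square[OF fvec_1_Vsp] by (simp_all add: qform_def evec_def fvec_def enorm_def)
  have "qform n t s (vadd (evec 1) (fvec 1)) = 1"
    using n_ge_1 by (simp add: qform_def fvec_def evec_def vadd_def enorm_def if_distrib cong: if_cong)
  then show "e * f + f * e = 1"
    using \<iota>_polar[OF evec_1_Vsp fvec_1_Vsp] by (simp add: qform_def fvec_def evec_def enorm_def sc_one)
qed

lemma V1_anticomm_ef:
  assumes "u \<in> V1sp n isF"
  shows "\<iota> u * e = - (e * \<iota> u)" "\<iota> u * f = - (f * \<iota> u)"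
proof -
  have u: "u \<in> Vsp n isF" "fst u 1 = 0" "snd (snd u) 1 = 0" using assms by (auto simp: V1sp_def)
  show "\<iota> u * e = - (e * \<iota> u)"
    using u n_ge_1 by (intro \<iota>_anticomm evec_1_Vsp)
      (auto simp: qform_def evec_def vadd_def enorm_def intro!: sum.cong)
  show "\<iota> u * f = - (f * \<iota> u)"
    using u n_ge_1 by (intro \<iota>_anticomm fvec_1_Vsp)
      (auto simp: qform_def fvec_def vadd_def enorm_def intro!: sum.cong)
qed

lemma \<iota>_strip1:
  assumes "u \<in> Vsp n isF"
  shows "\<iota> u = sc (fst u 1) * e + sc (snd (snd u) 1) * f + \<iota> (strip1 u)"
proof -
  have V: "(evec 1 :: 'a qvec) \<in> Vsp n isF" "(fvec 1 :: 'a qvec) \<in> Vsp n isF" "strip1 u \<in> Vsp n isF"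
    using evec_1_Vsp fvec_1_Vsp strip1_V1sp[OF assms] by (auto simp: V1sp_def)
  have "\<iota> u = \<iota> (vadd (vadd (vscale (fst u 1) (evec 1)) (vscale (snd (snd u) 1) (fvec 1))) (strip1 u))"
    using vadd_strip1 by metis
  also have "\<dots> = sc (fst u 1) * e + sc (snd (snd u) 1) * f + \<iota> (strip1 u)"
    using V by (simp only: \<iota>_vadd \<iota>_vscale Vsp_vadd Vsp_vscale)
  finally show ?thesis .
qed

lemma \<iota>_vadd_in_span:
  "u \<in> Vsp n isF \<Longrightarrow> w \<in> Vsp n isF \<Longrightarrow> \<iota> u \<in> vs.span X \<Longrightarrow> \<iota> w \<in> vs.span X
   \<Longrightarrow> \<iota> (vadd u w) \<in> vs.span X"
  by (simp add: \<iota>_vadd vs.span_add)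

lemma \<iota>_vscale_in_span: "u \<in> Vsp n isF \<Longrightarrow> \<iota> u \<in> vs.span X \<Longrightarrow> \<iota> (vscale c u) \<in> vs.span X"
  using vs.span_scale[of "\<iota> u" X c] by (simp add: \<iota>_vscale scl_def)

lemma \<iota>_V1_basis_combination_in_span:
  assumes "u \<in> V1_basis n isF" "w \<in> V1_basis n isF"
  shows "vadd (vscale c u) (vscale c' w) \<in> Vsp n isF"
    "\<iota> (vadd (vscale c u) (vscale c' w)) \<in> vs.span (\<iota> ` V1_basis n isF)"
proof -
  have V: "u \<in> Vsp n isF" "w \<in> Vsp n isF" using assms V1_basis_Vsp by blast+
  then show "vadd (vscale c u) (vscale c' w) \<in> Vsp n isF" by (intro Vsp_vadd Vsp_vscale)
  have "\<iota> u \<in> vs.span (\<iota> ` V1_basis n isF)" "\<iota> w \<in> vs.span (\<iota> ` V1_basis n isF)"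
    using assms by (simp_all add: vs.span_base)
  with V show "\<iota> (vadd (vscale c u) (vscale c' w)) \<in> vs.span (\<iota> ` V1_basis n isF)"
    by (intro \<iota>_vadd_in_span Vsp_vscale \<iota>_vscale_in_span)
qed

lemma \<iota>_E_part_in_span:
  assumes "z \<in> E_space isF"
  shows "\<iota> ((\<lambda>_. 0), z, (\<lambda>_. 0)) \<in> vs.span (\<iota> ` V1_basis n isF)"
proof (cases isF)
  case True
  then have "((\<lambda>_. 0), z, (\<lambda>_. 0)) = vadd (vscale (fst z) E_one_vec) (vscale 0 E_one_vec)"
    using assms unfolding E_one_vec_def vscale_def vadd_def E_space_def by (cases z) auto
  moreover have "E_one_vec \<in> V1_basis n isF" by (simp add: V1_basis_def E_basis_def)
  ultimately show ?thesis using \<iota>_V1_basis_combination_in_span by metis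
next
  case False
  then have "((\<lambda>_. 0), z, (\<lambda>_. 0)) = vadd (vscale (fst z) E_one_vec) (vscale (snd z) E_gen_vec)"
    unfolding E_one_vec_def E_gen_vec_def vscale_def vadd_def by (cases z) auto
  moreover have "E_one_vec \<in> V1_basis n isF" "E_gen_vec \<in> V1_basis n isF"
    using False by (simp_all add: V1_basis_def E_basis_def)
  ultimately show ?thesis using \<iota>_V1_basis_combination_in_span by metis
qed

lemma \<iota>_V1sp_in_span:
  assumes "u \<in> V1sp n isF"
  shows "\<iota> u \<in> vs.span (\<iota> ` V1_basis n isF)"
proof -
  obtain a z b where u: "u = (a, z, b)" by (cases u)
  have ab0: "a i = 0" "b i = 0" if "i < 2 \<or> n < i" for i
    using assms that unfolding u V1sp_def Vsp_def by (auto simp: less_2_cases_iff)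
  have z: "z \<in> E_space isF" using assms unfolding u V1sp_def Vsp_def by auto
  define tr where "tr k = ((\<lambda>i. if i \<le> k then a i else 0), z, (\<lambda>i. if i \<le> k then b i else 0))" for k
  have tr_Vsp: "tr k \<in> Vsp n isF" for k
    using ab0 z unfolding tr_def Vsp_def by auto
  have "\<iota> (tr k) \<in> vs.span (\<iota> ` V1_basis n isF)" for k
  proof (induction k)
    case 0
    have "tr 0 = ((\<lambda>_. 0), z, (\<lambda>_. 0))" using ab0 unfolding tr_def by (auto simp: fun_eq_iff)
    then show ?case using \<iota>_E_part_in_span[OF z] by simp
  next
    case (Suc k)
    show ?case
    proof (cases "2 \<le> Suc k \<and> Suc k \<le> n")
      case True
      let ?w = "vadd (vscale (a (Suc k)) (evec (Suc k))) (vscale (b (Suc k)) (fvec (Suc k)))"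
      have "evec (Suc k) \<in> V1_basis n isF" "fvec (Suc k) \<in> V1_basis n isF"
        using True by (auto simp: V1_basis_def)
      then have "?w \<in> Vsp n isF" "\<iota> ?w \<in> vs.span (\<iota> ` V1_basis n isF)"
        by (rule \<iota>_V1_basis_combination_in_span)+
      moreover have "tr (Suc k) = vadd (tr k) ?w"
        unfolding tr_def vadd_def vscale_def evec_def fvec_def by (auto simp: fun_eq_iff le_Suc_eq)
      ultimately show ?thesis using \<iota>_vadd_in_span[OF tr_Vsp] Suc.IH by simp
    next
      case False
      then have "tr (Suc k) = tr k" using ab0 unfolding tr_def by (auto simp: fun_eq_iff le_Suc_eq)
      then show ?thesis using Suc.IH by simp
    qed
  qed
  moreover have "tr n = u" unfolding tr_def u using ab0 by (auto simp: fun_eq_iff)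
  ultimately show ?thesis by metis
qed

lemma V1_basis_anticomm:
  assumes "g \<in> \<iota> ` V1_basis n isF" "h \<in> \<iota> ` V1_basis n isF"
  shows "g * h + h * g \<in> range sc" "g * g \<in> range sc"
proof -
  obtain u w where "u \<in> Vsp n isF" "w \<in> Vsp n isF" "g = \<iota> u" "h = \<iota> w"
    using assms V1_basis_Vsp by blast
  then show "g * h + h * g \<in> range sc" "g * g \<in> range sc"
    by (simp_all add: \<iota>_polar \<iota>_square)
qed

abbreviation Clif_V1 :: "'c set" where
  "Clif_V1 \<equiv> alg_gen sc UNIV (\<iota> ` V1sp n isF)"

lemma Clif_V1_finite_span:
  "\<exists>M. finite M \<and> card M \<le> 2 ^ (2 * (n - 1) + E_dim isF) \<and> Clif_V1 \<subseteq> vs.span M"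
proof -
  have fin: "finite (V1_basis n isF :: 'a qvec set)" by (simp add: V1_basis_def E_basis_def)
  then have "finite (\<iota> ` V1_basis n isF)" by simp
  moreover have "\<iota> ` V1sp n isF \<subseteq> vs.span (\<iota> ` V1_basis n isF)"
    using \<iota>_V1sp_in_span by blast
  ultimately obtain M where M: "finite M" "card M \<le> 2 ^ card (\<iota> ` V1_basis n isF)" "Clif_V1 \<subseteq> vs.span M"
    using alg_gen_finite_span V1_basis_anticomm by metis
  have "card (\<iota> ` V1_basis n isF) \<le> 2 * (n - 1) + E_dim isF"
    using order_trans[OF card_image_le[OF fin] card_V1_basis] .
  then have "card M \<le> 2 ^ (2 * (n - 1) + E_dim isF)"
    using M(2) power_increasing[of _ _ "2::nat"] by (meson order_trans one_le_numeral)
  then show ?thesis using M by blast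
qed

lemma V1_gen_anticomm: "g \<in> \<iota> ` V1sp n isF \<Longrightarrow> g * e = - (e * g) \<and> g * f = - (f * g)"
  using V1_anticomm_ef by blast

lemma Clif_V1_comm_ef_fe: "w \<in> Clif_V1 \<Longrightarrow> e * f * w = w * (e * f) \<and> f * e * w = w * (f * e)"
  using alg_gen_comm_ef_fe[OF V1_gen_anticomm] by blast

lemma Clif_V1_diff: "w \<in> Clif_V1 \<Longrightarrow> w' \<in> Clif_V1 \<Longrightarrow> w - w' \<in> Clif_V1"
  using alg_gen.add[OF _ alg_gen_uminus[of UNIV w']] by auto

lemma alg_gen_Vsp_subset_unit_combs:
  assumes "0 \<in> R" "- 1 \<in> R" "T1 \<subseteq> V1sp n isF"
    and "\<And>u. u \<in> T \<Longrightarrow> u \<in> Vsp n isF \<and> fst u 1 \<in> R \<and> snd (snd u) 1 \<in> R \<and> strip1 u \<in> T1"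
  shows "alg_gen sc R (\<iota> ` T) \<subseteq> unit_combs (alg_gen sc R (\<iota> ` T1))"
proof (rule alg_gen_subset_unit_combs)
  show "g * e = - (e * g) \<and> g * f = - (f * g)" if "g \<in> \<iota> ` T1" for g
    using that assms(3) V1_gen_anticomm by blast
  show "\<exists>\<alpha>\<in>R. \<exists>\<beta>\<in>R. \<exists>g\<in>\<iota> ` T1. h = sc \<alpha> * e + sc \<beta> * f + g" if "h \<in> \<iota> ` T" for h
    using that assms(4) \<iota>_strip1 by blast
qed (use assms(1,2) in auto)

lemma Clif_eq_unit_combs: "z \<in> unit_combs Clif_V1"
  using alg_gen_Vsp_subset_unit_combs[of UNIV "V1sp n isF" "Vsp n isF"] \<iota>_generates strip1_V1sp by blast

text \<open>Right multiplication by a matrix unit is injective on \<open>Clif(V\<^sub>1)\<close>: the four images span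
  \<open>Clif(V)\<close>, of dimension \<open>2 ^ (2 * n + dim E) = 4 * 2 ^ dim V\<^sub>1\<close>, while \<open>dim Clif(V\<^sub>1) \<le> 2 ^ dim V\<^sub>1\<close>.\<close>

lemma Clif_V1_mult_unit_eq_zero:
  assumes "X \<in> {e * f, f * e, e, f}" "w \<in> Clif_V1" "w * X = 0"
  shows "w = 0"
proof -
  let ?I = "{e * f, f * e, e, f}"
  obtain M where M: "finite M" "card M \<le> 2 ^ (2 * (n - 1) + E_dim isF)" "Clif_V1 \<subseteq> vs.span M"
    using Clif_V1_finite_span by blast
  obtain B where B: "F_lin_indep sc B" "card B = 2 ^ (2 * n + E_dim isF)"
    using dim_Clif by blast
  have indep: "vs.independent B"
    using B(1) unfolding F_lin_indep_def scl_def[symmetric] by (intro vs.independent_if_scalars_zero) auto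
  have span: "B \<subseteq> vs.span (\<Union>X\<in>?I. (\<lambda>w. w * X) ` Clif_V1)"
  proof
    fix z
    obtain a b c d where "a \<in> Clif_V1" "b \<in> Clif_V1" "c \<in> Clif_V1" "d \<in> Clif_V1"
      and z: "z = a * (e * f) + b * (f * e) + c * e + d * f"
      using Clif_eq_unit_combs by (rule unit_combsE)
    then have "a * (e * f) \<in> vs.span (\<Union>X\<in>?I. (\<lambda>w. w * X) ` Clif_V1)"
      "b * (f * e) \<in> vs.span (\<Union>X\<in>?I. (\<lambda>w. w * X) ` Clif_V1)"
      "c * e \<in> vs.span (\<Union>X\<in>?I. (\<lambda>w. w * X) ` Clif_V1)"
      "d * f \<in> vs.span (\<Union>X\<in>?I. (\<lambda>w. w * X) ` Clif_V1)"
      by (auto intro!: vs.span_base)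
    then show "z \<in> vs.span (\<Union>X\<in>?I. (\<lambda>w. w * X) ` Clif_V1)"
      unfolding z by (intro vs.span_add)
  qed
  have card: "card ?I * vs.dim Clif_V1 \<le> card B"
  proof -
    have "card ?I \<le> 4" by (rule order_trans[OF card_insert_le_m1]) (auto simp: card_insert_le_m1)
    moreover have "vs.dim Clif_V1 \<le> 2 ^ (2 * (n - 1) + E_dim isF)"
      using vs.dim_le_card[OF M(3,1)] M(2) by linarith
    moreover have "2 * n + E_dim isF = (2 * (n - 1) + E_dim isF) + 2" using n_ge_1 by simp
    then have "card B = 4 * 2 ^ (2 * (n - 1) + E_dim isF)"
      using B(2) by (simp only: power_add) simp
    ultimately show ?thesis by (simp add: mult_mono)
  qed
  have "\<And>X. X \<in> ?I \<Longrightarrow> Vector_Spaces.linear scl scl (\<lambda>w. w * X)"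
    using linear_module_homI[OF module_hom_mult_right] .
  from vs.eq_zero_if_images_span[OF _ this M(1,3) indep span card assms]
  show ?thesis by simp
qed

lemma unit_combs_Clif_V1_inject:
  assumes "a \<in> Clif_V1" "b \<in> Clif_V1" "c \<in> Clif_V1" "d \<in> Clif_V1"
    and "a' \<in> Clif_V1" "b' \<in> Clif_V1" "c' \<in> Clif_V1" "d' \<in> Clif_V1"
    and "a * (e * f) + b * (f * e) + c * e + d * f = a' * (e * f) + b' * (f * e) + c' * e + d' * f"
  shows "a = a' \<and> b = b' \<and> c = c' \<and> d = d'"
proof -
  have "(a - a') * (e * f) + (b - b') * (f * e) + (c - c') * e + (d - d') * f
      = (a * (e * f) + b * (f * e) + c * e + d * f) - (a' * (e * f) + b' * (f * e) + c' * e + d' * f)"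
    by (simp only: left_diff_distrib) (simp add: algebra_simps)
  also have "\<dots> = 0" using assms(9) by simp
  finally have zero: "(a - a') * (e * f) + (b - b') * (f * e) + (c - c') * e + (d - d') * f = 0" .
  have "a - a' \<in> Clif_V1" "b - b' \<in> Clif_V1" "c - c' \<in> Clif_V1" "d - d' \<in> Clif_V1"
    using assms(1-8) by (auto intro: Clif_V1_diff)
  from unit_combs_unique[OF Clif_V1_comm_ef_fe Clif_V1_mult_unit_eq_zero this zero]
  have "a - a' = 0 \<and> b - b' = 0 \<and> c - c' = 0 \<and> d - d' = 0" .
  then show ?thesis by simp
qed

lemma alg_gen_Lat_subset_unit_combs:
  assumes "- 1 \<in> val_ring v"
  shows "alg_gen sc (val_ring v) (\<iota> ` Lat v n isF t s)
           \<subseteq> unit_combs (alg_gen sc (val_ring v) (\<iota> ` Lat1 v n isF t s))"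
proof (rule alg_gen_Vsp_subset_unit_combs)
  fix u assume u: "u \<in> Lat v n isF t s"
  then have "strip1 u \<in> Lat1 v n isF t s" by (rule strip1_Lat1)
  with u show "u \<in> Vsp n isF \<and> fst u 1 \<in> val_ring v \<and> snd (snd u) 1 \<in> val_ring v
             \<and> strip1 u \<in> Lat1 v n isF t s"
    by (simp add: Lat_def)
qed (use assms in \<open>auto simp: Lat1_def val_ring_def\<close>)

lemma alg_gen_Lat1_subset_Clif_V1: "alg_gen sc R (\<iota> ` Lat1 v n isF t s) \<subseteq> Clif_V1"
  by (auto intro: alg_gen_mono[rotated 2] simp: Lat1_def)

lemma unit_comb_in_Clif_Lat_iff:
  assumes v: "padic_local_field v"
    and abcd: "a \<in> Clif_V1" "b \<in> Clif_V1" "c \<in> Clif_V1" "d \<in> Clif_V1"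
  shows "a * (e * f) + b * (f * e) + c * e + d * f \<in> alg_gen sc (val_ring v) (\<iota> ` Lat v n isF t s)
    \<longleftrightarrow> a \<in> alg_gen sc (val_ring v) (\<iota> ` Lat1 v n isF t s) \<and> b \<in> alg_gen sc (val_ring v) (\<iota> ` Lat1 v n isF t s)
      \<and> c \<in> alg_gen sc (val_ring v) (\<iota> ` Lat1 v n isF t s) \<and> d \<in> alg_gen sc (val_ring v) (\<iota> ` Lat1 v n isF t s)"
    (is "?z \<in> ?L \<longleftrightarrow> a \<in> ?L1 \<and> b \<in> ?L1 \<and> c \<in> ?L1 \<and> d \<in> ?L1")
proof
  assume "?z \<in> ?L"
  then obtain a' b' c' d' where L1: "a' \<in> ?L1" "b' \<in> ?L1" "c' \<in> ?L1" "d' \<in> ?L1"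
    and z: "?z = a' * (e * f) + b' * (f * e) + c' * e + d' * f"
    using alg_gen_Lat_subset_unit_combs[OF plus_minus_one_in_val_ring(2)[OF v]] by (blast elim: unit_combsE)
  moreover have "a' \<in> Clif_V1" "b' \<in> Clif_V1" "c' \<in> Clif_V1" "d' \<in> Clif_V1"
    using L1 alg_gen_Lat1_subset_Clif_V1 by blast+
  ultimately show "a \<in> ?L1 \<and> b \<in> ?L1 \<and> c \<in> ?L1 \<and> d \<in> ?L1"
    using unit_combs_Clif_V1_inject[OF abcd] by metis
next
  assume "a \<in> ?L1 \<and> b \<in> ?L1 \<and> c \<in> ?L1 \<and> d \<in> ?L1"
  then have "?z \<in> unit_combs ?L1" by (blast intro: unit_combsI)
  moreover have "e \<in> ?L" "f \<in> ?L"
    using evec_fvec_Lat[OF v n_ge_1] by (blast intro: alg_gen.gen)+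
  moreover have "?L1 \<subseteq> ?L"
    by (auto intro: alg_gen_mono[rotated 2] simp: Lat1_def)
  ultimately show "?z \<in> ?L" using unit_combs_subset_alg_gen by blast
qed

end

theorem claim3p2:
  fixes v :: "'a::field \<Rightarrow> int" and n :: nat and isF :: bool and t s :: 'a
    and sc :: "'a \<Rightarrow> 'c::ring_1" and \<iota> :: "'a qvec \<Rightarrow> 'c" and star :: "'c \<Rightarrow> 'c"
    and x :: "'a qvec" and lam :: 'a and y :: 'c
  assumes "padic_local_field v"
    and "1 \<le> n"
    and "isF \<or> t ^ 2 - 4 * s \<noteq> 0"
    and "clifford_alg n isF t s sc \<iota> star"
    and "x \<in> V1sp n isF"
    and "lam \<noteq> 0"
    and "y \<in> GSpin1 n isF sc \<iota> star"
  shows "(1 + \<iota> (fvec 1) * \<iota> x) * ((\<iota> (evec 1) * \<iota> (fvec 1) + sc lam * (\<iota> (fvec 1) * \<iota> (evec 1))) * y)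
           \<in> alg_gen sc (val_ring v) (\<iota> ` Lat v n isF t s)
     \<longleftrightarrow> y \<in> alg_gen sc (val_ring v) (\<iota> ` Lat1 v n isF t s)
       \<and> sc lam * y \<in> alg_gen sc (val_ring v) (\<iota> ` Lat1 v n isF t s)
       \<and> \<iota> x * y \<in> alg_gen sc (val_ring v) (\<iota> ` Lat1 v n isF t s)"
proof -
  interpret clifford_setup n isF t s sc \<iota> star
    using assms(2,4) by unfold_locales
  let ?L1 = "alg_gen sc (val_ring v) (\<iota> ` Lat1 v n isF t s)"
  have "y \<in> even_gen sc (\<iota> ` V1sp n isF)" using assms(7) by (simp add: GSpin1_def)
  then have y: "y \<in> Clif_V1" "y * e = e * y" "y * f = f * y"
    using even_gen_subset_alg_gen even_gen_comm_ef[OF V1_gen_anticomm] by blast+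
  have xy: "\<iota> x * y \<in> Clif_V1" using assms(5) y(1) by (auto intro: alg_gen.gen alg_gen.mult)
  have decomp: "(1 + f * \<iota> x) * ((e * f + sc lam * (f * e)) * y)
      = y * (e * f) + (sc lam * y) * (f * e) + 0 * e + (- (\<iota> x * y)) * f"
    using n_m_unit_comb V1_anticomm_ef[OF assms(5)] y(2,3) by blast
  have "sc lam * y \<in> Clif_V1" "- (\<iota> x * y) \<in> Clif_V1"
    using alg_gen.mult[OF alg_gen.scal[OF UNIV_I] y(1)] alg_gen_uminus[OF UNIV_I xy] .
  note coeffs = unit_comb_in_Clif_Lat_iff[OF assms(1) y(1) this(1) alg_gen_zero[OF UNIV_I] this(2)]
  have "- 1 \<in> val_ring v" using plus_minus_one_in_val_ring[OF assms(1)] by blast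
  then have "- (\<iota> x * y) \<in> ?L1 \<longleftrightarrow> \<iota> x * y \<in> ?L1"
    using alg_gen_uminus[of "val_ring v"] by force
  moreover have "0 \<in> ?L1" by (simp add: alg_gen_zero val_ring_def)
  ultimately show ?thesis unfolding decomp coeffs by blast
qed

end
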